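(* The allocation rule $x$ of the two-bidder auction defined below is monotone (for each $i$ and fixed $v_{-i}$, $v_i\mapsto x_i(v_i,v_{-i})$ is non-decreasing), and the Myerson payments $\pi_i(v)=v_ix_i(v)-\int_0^{v_i}x_i(u,v_{-i})\,du$ satisfy $\pi_i(v)\le 1$ for all $v$ and $i$.
   Context: One divisible good, two bidders with values per unit $v_1,v_2\ge0$ and known budgets $B_1=B_2=1$. The allocation $x(v_1,v_2)=(x_1,x_2)$ is symmetric ($x(v_1,v_2)$ is obtained from $x(v_2,v_1)$ by swapping coordinates) and for $v_1\ge v_2$ is given by the first applicable rule: if $v_1=v_2$, $x=(\frac12,\frac12)$; else if $v_2\le\frac13$, $x=(1,0)$; else if $\frac13\le v_2\le1$, $x=(\frac14+\frac1{4v_2},\frac34-\frac1{4v_2})$; else ($v_2\ge1$) $x=(\frac12,\frac12)$. *)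

theory Defs
  imports "HOL-Analysis.Analysis"
begin

text \<open>Allocation for the ordered case a \<ge> b (first applicable rule).\<close>
definition alloc_ord :: "real \<Rightarrow> real \<Rightarrow> real \<times> real" where
  "alloc_ord a b =
     (if a = b then (1/2, 1/2)
      else if b \<le> 1/3 then (1, 0)
      else if 1/3 \<le> b \<and> b \<le> 1 then (1/4 + 1/(4*b), 3/4 - 1/(4*b))
      else (1/2, 1/2))"

definition alloc :: "real \<Rightarrow> real \<Rightarrow> real \<times> real" where
  "alloc a b = (if b \<le> a then alloc_ord a b else prod.swap (alloc_ord b a))"

definition x1 :: "real \<Rightarrow> real \<Rightarrow> real" where "x1 a b = fst (alloc a b)"
definition x2 :: "real \<Rightarrow> real \<Rightarrow> real" where "x2 a b = snd (alloc a b)"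

definition pay1 :: "real \<Rightarrow> real \<Rightarrow> real" where
  "pay1 a b = a * x1 a b - integral {0..a} (\<lambda>u. x1 u b)"
definition pay2 :: "real \<Rightarrow> real \<Rightarrow> real" where
  "pay2 a b = b * x2 a b - integral {0..b} (\<lambda>u. x2 a u)"

end

theory Submission
  imports Defs
begin

text \<open>With the share
  \<open>s c\<close> of the lower bid \<open>c\<close> (\<open>0\<close> below \<open>1/3\<close>, then \<open>3/4 - 1/(4c)\<close>, then \<open>1/2\<close>), the lower
  bidder gets \<open>s\<close> of their own bid and the higher bidder gets \<open>1 - s\<close> of the lower bid; since
  \<open>s\<close> is non-decreasing with values in \<open>[0, 1/2]\<close>, raising one's bid can only help. Above
  \<open>1\<close> a bidder's allocation no longer depends on their own bid, so their Myerson payment is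
  their allocation minus an integral over \<open>[0, 1]\<close>, hence at most \<open>1\<close>.\<close>

definition loser_share :: "real \<Rightarrow> real" where
  "loser_share c = (if c \<le> 1/3 then 0 else if c \<le> 1 then 3/4 - 1/(4*c) else 1/2)"

lemma loser_share_nonneg: "0 \<le> loser_share c"
  by (auto simp: loser_share_def field_simps)

lemma loser_share_le_half: "loser_share c \<le> 1/2"
  by (auto simp: loser_share_def field_simps)

lemma loser_share_mono: "c \<le> d \<Longrightarrow> loser_share c \<le> loser_share d"
  by (auto simp: loser_share_def field_simps)

lemma x1_eq_loser_share:
  "x1 a b = (if a < b then loser_share a else if a = b then 1/2 else 1 - loser_share b)"
  unfolding x1_def alloc_def alloc_ord_def loser_share_def by auto

lemma x2_eq_x1_swap: "x2 a b = x1 b a"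
  unfolding x1_def x2_def alloc_def alloc_ord_def by auto

lemma pay2_eq_pay1_swap: "pay2 a b = pay1 b a"
  unfolding pay1_def pay2_def x2_eq_x1_swap by simp

lemma x1_bounds: "0 \<le> x1 a b" "x1 a b \<le> 1"
  using loser_share_nonneg[of a] loser_share_le_half[of a]
    loser_share_nonneg[of b] loser_share_le_half[of b]
  by (auto simp: x1_eq_loser_share)

lemma x1_mono: "a \<le> a' \<Longrightarrow> x1 a b \<le> x1 a' b"
  using loser_share_mono[of a a'] loser_share_mono[of a b]
    loser_share_le_half[of a] loser_share_le_half[of b] loser_share_le_half[of a']
  by (auto simp: x1_eq_loser_share)

lemma x1_const_above_one: "1 < u \<Longrightarrow> u \<le> a \<Longrightarrow> x1 u b = x1 a b"
  by (auto simp: x1_eq_loser_share loser_share_def)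

lemma myerson_payment_le_one:
  fixes f :: "real \<Rightarrow> real"
  assumes mono: "mono_on {0..} f"
    and bounds: "\<And>u. 0 \<le> u \<Longrightarrow> 0 \<le> f u \<and> f u \<le> 1"
    and const: "\<And>u. 1 < u \<Longrightarrow> u \<le> a \<Longrightarrow> f u = f a"
    and "0 \<le> a"
  shows "a * f a - integral {0..a} f \<le> 1"
proof -
  have integrable: "f integrable_on {0..c}" for c
    by (rule integrable_on_mono_on) (rule mono_on_subset[OF mono], auto)
  have integral_f_nonneg: "0 \<le> integral {0..c} f" for c
    by (rule integral_nonneg[OF integrable]) (simp add: bounds)
  show ?thesis
  proof (cases "a \<le> 1")
    case True
    then have "a * f a \<le> 1"
      using \<open>0 \<le> a\<close> bounds[of a] by (simp add: mult_le_one)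
    then show ?thesis using integral_f_nonneg[of a] by linarith
  next
    case False
    have "integral {1..a} f = integral {1..a} (\<lambda>_. f a)"
      by (rule integral_spike[where S="{1}"]) (auto intro!: const[symmetric])
    then have tail: "integral {1..a} f = (a - 1) * f a"
      using False by simp
    have "integral {0..1} f + integral {1..a} f = integral {0..a} f"
      using Henstock_Kurzweil_Integration.integral_combine[of 0 1 a f] False integrable[of a] by auto
    then have "a * f a - integral {0..a} f = f a - integral {0..1} f"
      using tail by (simp add: algebra_simps)
    then show ?thesis using integral_f_nonneg[of 1] bounds[of a] \<open>0 \<le> a\<close> by linarith
  qed
qed

lemma pay1_le_one: "0 \<le> a \<Longrightarrow> pay1 a b \<le> 1"
  unfolding pay1_def
  by (rule myerson_payment_le_one)
    (auto intro: mono_onI x1_mono x1_const_above_one simp: x1_bounds)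

theorem mainTheorem11:
  shows "(\<forall>b\<ge>0. mono_on {0..} (\<lambda>a. x1 a b))
       \<and> (\<forall>a\<ge>0. mono_on {0..} (\<lambda>b. x2 a b))
       \<and> (\<forall>a\<ge>0. \<forall>b\<ge>0. pay1 a b \<le> 1 \<and> pay2 a b \<le> 1)"
  by (auto intro!: mono_onI x1_mono pay1_le_one simp: x2_eq_x1_swap pay2_eq_pay1_swap)

end
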